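(* Let $X$ be a compact polyhedron such that $X\times\mathbb{N}^+$ embeds in $\mathbb{R}^n$, and let $I=[0,1]$. Then the deleted product $\widetilde{X\times I}$ admits a $\mathbb{Z}/2$-equivariant map to $S^{n-1}$.
   Context: $\mathbb{N}^+$ denotes the one-point compactification of the countable discrete space $\mathbb{N}$. For a space $Y$, its deleted product is $\tilde Y:=Y\times Y\setminus\Delta_Y$, where $\Delta_Y=\{(y,y):y\in Y\}$; $\mathbb{Z}/2$ acts on $\tilde Y$ by exchanging the two factors, $(p,q)\mapsto(q,p)$, and on $S^{n-1}$ by the antipodal involution $x\mapsto -x$. A $\mathbb{Z}/2$-map is a continuous map commuting with these involutions. *)

theory Defs
  imports "HOL-Analysis.Analysis"
begin

definition compact_polyhedron :: "'a::euclidean_space set \<Rightarrow> bool" where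
  "compact_polyhedron X \<longleftrightarrow> (\<exists>\<T>. finite \<T> \<and> (\<forall>S\<in>\<T>. polytope S) \<and> X = \<Union>\<T>)"

text \<open>A model of the one-point compactification of the discrete space of naturals:
  the subspace {0} \<union> {1/(k+1)} of the reals.\<close>
definition Nplus :: "real set" where
  "Nplus = insert 0 (range (\<lambda>k::nat. 1 / (real k + 1)))"

definition deleted_product :: "'a set \<Rightarrow> ('a \<times> 'a) set" where
  "deleted_product Y = {(p, q). p \<in> Y \<and> q \<in> Y \<and> p \<noteq> q}"

definition Z2_map_to_sphere :: "'a::topological_space set \<Rightarrow> ('a \<times> 'a \<Rightarrow> 'b::euclidean_space) \<Rightarrow> bool" where
  "Z2_map_to_sphere Y g \<longleftrightarrow>
     continuous_on (deleted_product Y) g \<and>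
     g ` deleted_product Y \<subseteq> sphere 0 1 \<and>
     (\<forall>p q. (p, q) \<in> deleted_product Y \<longrightarrow> g (q, p) = - g (p, q))"

end

theory Submission
  imports Defs
begin

(*
  Triangulate X \<times> I. For distinct points x, y of a simplicial complex, normalising the positive
  part of the difference of their barycentric coordinates gives a point r(x, y) of the simplex
  spanned by the vertices where x weighs more than y. So r(x, y) and r(y, x) lie in disjoint
  simplices, hence at distance at least some \<epsilon> > 0, and r is continuous on the deleted product.

  It remains to find a continuous, antisymmetric, nowhere vanishing map on pairs of points of
  X \<times> \<real> at distance at least \<epsilon>. The embedding h of X \<times> N\<^sup>+ provides one: compare the images
  of the two X-components under h, lifting the higher point to a level b \<in> N\<^sup>+ close to 0 when the
  heights differ by at least \<epsilon>/2. Normalising to the unit sphere gives the Z/2-map.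
*)

definition barycentric :: "'b::real_vector set \<Rightarrow> 'b \<Rightarrow> ('b \<Rightarrow> real) \<Rightarrow> bool" where
  "barycentric C x w \<longleftrightarrow> (\<forall>c. c \<notin> C \<longrightarrow> w c = 0) \<and> (\<forall>c. 0 \<le> w c) \<and>
     sum w C = 1 \<and> (\<Sum>c\<in>C. w c *\<^sub>R c) = x"

lemma barycentric_exists:
  assumes "finite C" "x \<in> convex hull C"
  shows "\<exists>w. barycentric C x w"
proof -
  obtain u where u: "\<forall>c\<in>C. 0 \<le> u c" "sum u C = 1" "(\<Sum>c\<in>C. u c *\<^sub>R c) = x"
    using assms convex_hull_finite[OF assms(1)] by blast
  have "barycentric C x (\<lambda>c. if c \<in> C then u c else 0)"
    using u assms(1) by (auto simp: barycentric_def intro: sum.cong)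
  then show ?thesis by blast
qed

lemma barycentric_unique:
  assumes "finite C" "\<not> affine_dependent C" "barycentric C x w1" "barycentric C x w2"
  shows "w1 = w2"
proof -
  have "sum (\<lambda>c. w1 c - w2 c) C = 0" "(\<Sum>c\<in>C. (w1 c - w2 c) *\<^sub>R c) = 0"
    using assms(3,4) by (simp_all add: barycentric_def sum_subtractf scaleR_diff_left)
  then have "\<forall>c\<in>C. w1 c = w2 c"
    using assms(2) affine_dependent_explicit_finite[OF assms(1)] by force
  then show ?thesis using assms(3,4) by (metis barycentric_def ext)
qed

lemma barycentric_mono:
  assumes "barycentric D x w" "D \<subseteq> C" "finite C"
  shows "barycentric C x w"
proof -
  have zero: "\<forall>c\<in>C - D. w c = 0" using assms(1) by (simp add: barycentric_def)
  have "sum w C = sum w D" "(\<Sum>c\<in>C. w c *\<^sub>R c) = (\<Sum>c\<in>D. w c *\<^sub>R c)"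
    by (intro sum.mono_neutral_right[OF assms(3,2)]; use zero in simp)+
  then show ?thesis using assms(1,2) by (auto simp: barycentric_def)
qed

text \<open>The coordinate at \<open>v\<close> extends affinely to the whole space: take the linear functional
  dual to the basis \<open>{c - c0 | c \<in> C - {c0}}\<close> that picks out the coefficient of \<open>v - c0\<close>.\<close>
lemma barycentric_coordinate_continuous:
  fixes C :: "'b::euclidean_space set"
  assumes "finite C" "\<not> affine_dependent C" "v \<in> C"
  obtains \<beta> where "continuous_on UNIV \<beta>" "\<And>x w. barycentric C x w \<Longrightarrow> \<beta> x = w v"
proof (cases "C = {v}")
  case True
  then show ?thesis by (intro that[of "\<lambda>_. 1"]) (auto simp: barycentric_def)
next
  case False
  then obtain c0 where c0: "c0 \<in> C" "c0 \<noteq> v" using assms(3) by blast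
  define C' where "C' = C - {c0}"
  have CC: "C = insert c0 C'" "c0 \<notin> C'" "v \<in> C'" "finite C'"
    using c0 assms by (auto simp: C'_def)
  have "independent ((\<lambda>x. - c0 + x) ` C')"
    using assms(2) affine_dependent_iff_dependent[OF CC(2)] CC(1) by simp
  then obtain g :: "'b \<Rightarrow> real" where g: "linear g"
      "\<forall>x\<in>(\<lambda>x. - c0 + x) ` C'. g x = (if x = - c0 + v then 1 else 0)"
    using real_vector.linear_independent_extend[of _ "\<lambda>x. if x = - c0 + v then (1::real) else 0"]
    by blast
  have g_vertex: "g (c - c0) = (if c = v then 1 else 0)" if "c \<in> C'" for c
    using g(2) that by (auto simp: algebra_simps)
  show ?thesis
  proof (rule that[of "\<lambda>x. g (x - c0)"])
    show "continuous_on UNIV (\<lambda>x. g (x - c0))"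
      by (rule linear_continuous_on_compose[OF _ g(1)]) (intro continuous_intros)
  next
    fix x w assume w: "barycentric C x w"
    have "(\<Sum>c\<in>C. w c *\<^sub>R c0) = c0"
      using w by (simp add: barycentric_def flip: scaleR_sum_left)
    then have "x - c0 = (\<Sum>c\<in>C. w c *\<^sub>R c) - (\<Sum>c\<in>C. w c *\<^sub>R c0)"
      using w by (simp add: barycentric_def)
    also have "\<dots> = (\<Sum>c\<in>C'. w c *\<^sub>R (c - c0))"
      using CC by (simp add: sum_subtractf scaleR_diff_right)
    finally have "g (x - c0) = (\<Sum>c\<in>C'. w c * g (c - c0))"
      using g(1) by (simp add: linear_sum linear_scale)
    also have "\<dots> = (\<Sum>c\<in>C'. if c = v then w c else 0)"
      by (intro sum.cong) (auto simp: g_vertex)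
    also have "\<dots> = w v"
      using CC(3,4) by simp
    finally show "g (x - c0) = w v" .
  qed
qed

definition simplex_vertices :: "'b::euclidean_space set \<Rightarrow> 'b set" where
  "simplex_vertices S = {v. v extreme_point_of S}"

lemma simplex_vertices_convex_hull:
  fixes C :: "'b::euclidean_space set"
  assumes "\<not> affine_dependent C"
  shows "simplex_vertices (convex hull C) = C"
  using extreme_point_of_convex_hull_affine_independent[OF assms]
  by (auto simp: simplex_vertices_def)

lemma simplicial_complex_simplex:
  fixes T :: "'b::euclidean_space set set"
  assumes "simplicial_complex T" "S \<in> T"
  shows "\<not> affine_dependent (simplex_vertices S)" "finite (simplex_vertices S)"
    "S = convex hull (simplex_vertices S)"
proof -
  obtain n where "n simplex S" using assms unfolding simplicial_complex_def by blast
  then obtain C where C: "\<not> affine_dependent C" "S = convex hull C"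
    unfolding simplex_def by blast
  then have "simplex_vertices S = C" by (simp add: simplex_vertices_convex_hull)
  then show "\<not> affine_dependent (simplex_vertices S)" "finite (simplex_vertices S)"
    "S = convex hull (simplex_vertices S)"
    using C aff_independent_finite by auto
qed

lemma simplicial_complex_hull_vertex_subset:
  fixes T :: "'b::euclidean_space set set"
  assumes "simplicial_complex T" "S \<in> T" "A \<subseteq> simplex_vertices S"
  shows "convex hull A \<in> T"
proof -
  note S = simplicial_complex_simplex[OF assms(1,2)]
  have "convex hull A face_of S"
    using face_of_convex_hull_affine_independent[OF S(1)] assms(3) S(3) by auto
  then show ?thesis using assms(1,2) by (auto simp: simplicial_complex_def)
qed

lemma simplicial_complex_Int:
  fixes T :: "'b::euclidean_space set set"
  assumes "simplicial_complex T" "S \<in> T" "S' \<in> T"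
  obtains D where "D \<subseteq> simplex_vertices S" "D \<subseteq> simplex_vertices S'" "S \<inter> S' = convex hull D"
proof -
  note S = simplicial_complex_simplex[OF assms(1,2)]
  note S' = simplicial_complex_simplex[OF assms(1,3)]
  have "S \<inter> S' face_of S" "S' \<inter> S face_of S'"
    using assms unfolding simplicial_complex_def by blast+
  then obtain D D' where D: "D \<subseteq> simplex_vertices S" "S \<inter> S' = convex hull D"
    and D': "D' \<subseteq> simplex_vertices S'" "S \<inter> S' = convex hull D'"
    using face_of_convex_hull_affine_independent[OF S(1)] face_of_convex_hull_affine_independent[OF S'(1)]
      S(3) S'(3) by (metis Int_commute)
  have "D = simplex_vertices (S \<inter> S')"
    using D affine_independent_subset[OF S(1)] by (simp add: simplex_vertices_convex_hull)
  moreover have "D' = simplex_vertices (S \<inter> S')"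
    using D' affine_independent_subset[OF S'(1)] by (simp add: simplex_vertices_convex_hull)
  ultimately show ?thesis using that D D' by simp
qed

lemma simplicial_complex_disjoint:
  fixes T :: "'b::euclidean_space set set"
  assumes "simplicial_complex T" "S \<in> T" "S' \<in> T"
    and "simplex_vertices S \<inter> simplex_vertices S' = {}"
  shows "S \<inter> S' = {}"
proof -
  obtain D where "D \<subseteq> simplex_vertices S" "D \<subseteq> simplex_vertices S'" "S \<inter> S' = convex hull D"
    using simplicial_complex_Int[OF assms(1-3)] .
  then show ?thesis using assms(4) by auto
qed

definition complex_vertices :: "'b::euclidean_space set set \<Rightarrow> 'b set" where
  "complex_vertices T = \<Union>(simplex_vertices ` T)"

lemma finite_complex_vertices:
  fixes T :: "'b::euclidean_space set set"
  assumes "simplicial_complex T"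
  shows "finite (complex_vertices T)"
  using assms simplicial_complex_simplex[OF assms]
  unfolding complex_vertices_def simplicial_complex_def by auto

text \<open>The choice of the simplex containing \<open>x\<close> is immaterial, because two simplices of a complex
  meet in a common face.\<close>
definition complex_coords :: "'b::euclidean_space set set \<Rightarrow> 'b \<Rightarrow> 'b \<Rightarrow> real" where
  "complex_coords T x = (SOME w. \<exists>S\<in>T. x \<in> S \<and> barycentric (simplex_vertices S) x w)"

lemma barycentric_complex_coords:
  fixes T :: "'b::euclidean_space set set"
  assumes T: "simplicial_complex T" and "S \<in> T" "x \<in> S"
  shows "barycentric (simplex_vertices S) x (complex_coords T x)"
proof -
  have "\<exists>w. barycentric (simplex_vertices S) x w"
    using barycentric_exists simplicial_complex_simplex[OF T \<open>S \<in> T\<close>] \<open>x \<in> S\<close> by metis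
  then have "\<exists>w. \<exists>S0\<in>T. x \<in> S0 \<and> barycentric (simplex_vertices S0) x w"
    using assms(2,3) by blast
  then have "\<exists>S0\<in>T. x \<in> S0 \<and> barycentric (simplex_vertices S0) x (complex_coords T x)"
    unfolding complex_coords_def by (rule someI_ex)
  then obtain S0 where S0: "S0 \<in> T" "x \<in> S0"
    "barycentric (simplex_vertices S0) x (complex_coords T x)" by blast
  note V = simplicial_complex_simplex[OF T \<open>S \<in> T\<close>]
  note V0 = simplicial_complex_simplex[OF T \<open>S0 \<in> T\<close>]
  obtain D where D: "D \<subseteq> simplex_vertices S0" "D \<subseteq> simplex_vertices S" "S0 \<inter> S = convex hull D"
    using simplicial_complex_Int[OF T S0(1) \<open>S \<in> T\<close>] .
  have "finite D" using D(1) V0(2) finite_subset by blast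
  then obtain w where w: "barycentric D x w"
    using barycentric_exists D(3) S0(2) \<open>x \<in> S\<close> by blast
  have "complex_coords T x = w"
    using barycentric_unique[OF V0(2,1) S0(3) barycentric_mono[OF w D(1) V0(2)]] .
  then show ?thesis using barycentric_mono[OF w D(2) V(2)] by simp
qed

lemma barycentric_complex_coords_vertices:
  fixes T :: "'b::euclidean_space set set"
  assumes T: "simplicial_complex T" and "x \<in> \<Union>T"
  shows "barycentric (complex_vertices T) x (complex_coords T x)"
proof -
  obtain S where "S \<in> T" "x \<in> S" using assms(2) by blast
  then show ?thesis
    using barycentric_mono[OF barycentric_complex_coords[OF T] _ finite_complex_vertices[OF T]]
    by (auto simp: complex_vertices_def)
qed

lemma continuous_on_complex_coords:
  fixes T :: "'b::euclidean_space set set"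
  assumes T: "simplicial_complex T"
  shows "continuous_on (\<Union>T) (\<lambda>x. complex_coords T x v)"
proof -
  have "continuous_on (\<Union>S\<in>T. S) (\<lambda>x. complex_coords T x v)"
  proof (rule continuous_on_closed_Union)
    show "finite T" using T by (simp add: simplicial_complex_def)
  next
    fix S assume "S \<in> T"
    note V = simplicial_complex_simplex[OF T this]
    show "closed S" using V by (metis compact_convex_hull finite_imp_compact compact_imp_closed)
    show "continuous_on S (\<lambda>x. complex_coords T x v)"
    proof (cases "v \<in> simplex_vertices S")
      case True
      then obtain \<beta> where \<beta>: "continuous_on UNIV \<beta>"
        "\<And>x w. barycentric (simplex_vertices S) x w \<Longrightarrow> \<beta> x = w v"
        using barycentric_coordinate_continuous V(1,2) by metis
      show ?thesis
      proof (rule continuous_on_eq)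
        show "continuous_on S \<beta>" using \<beta>(1) continuous_on_subset by blast
        show "\<beta> x = complex_coords T x v" if "x \<in> S" for x
          using \<beta>(2) barycentric_complex_coords[OF T \<open>S \<in> T\<close> that] .
      qed
    next
      case False
      show ?thesis
      proof (rule continuous_on_eq[OF continuous_on_const])
        show "0 = complex_coords T x v" if "x \<in> S" for x
          using barycentric_complex_coords[OF T \<open>S \<in> T\<close> that] False
          by (simp add: barycentric_def)
      qed
    qed
  qed
  then show ?thesis by simp
qed

definition coord_excess :: "'b::euclidean_space set set \<Rightarrow> 'b \<Rightarrow> 'b \<Rightarrow> 'b \<Rightarrow> real" where
  "coord_excess T x y v = max 0 (complex_coords T x v - complex_coords T y v)"

definition complex_push :: "'b::euclidean_space set set \<Rightarrow> 'b \<times> 'b \<Rightarrow> 'b" where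
  "complex_push T z =
     (\<Sum>v\<in>complex_vertices T. (coord_excess T (fst z) (snd z) v /
        sum (coord_excess T (fst z) (snd z)) (complex_vertices T)) *\<^sub>R v)"

lemma sum_coord_excess_pos:
  fixes T :: "'b::euclidean_space set set"
  assumes T: "simplicial_complex T" and "x \<in> \<Union>T" "y \<in> \<Union>T" "x \<noteq> y"
  shows "0 < sum (coord_excess T x y) (complex_vertices T)"
proof (rule ccontr)
  let ?V = "complex_vertices T" and ?cx = "complex_coords T x" and ?cy = "complex_coords T y"
  assume nonpos: "\<not> ?thesis"
  have fin: "finite ?V" by (rule finite_complex_vertices[OF T])
  have bary_x: "barycentric ?V x ?cx" and bary_y: "barycentric ?V y ?cy"
    using barycentric_complex_coords_vertices[OF T] assms(2,3) by auto
  have nonneg: "0 \<le> coord_excess T x y v" for v by (simp add: coord_excess_def)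
  then have "sum (coord_excess T x y) ?V = 0"
    using nonpos sum_nonneg[of ?V "coord_excess T x y", OF nonneg] by linarith
  then have "\<forall>v\<in>?V. coord_excess T x y v = 0"
    using sum_nonneg_eq_0_iff[OF fin] nonneg by blast
  then have le: "\<forall>v\<in>?V. ?cx v \<le> ?cy v" by (auto simp: coord_excess_def)
  have "sum (\<lambda>v. ?cy v - ?cx v) ?V = 0"
    using bary_x bary_y by (simp add: barycentric_def sum_subtractf)
  then have "\<forall>v\<in>?V. ?cy v - ?cx v = 0"
    by (subst (asm) sum_nonneg_eq_0_iff[OF fin]) (use le in auto)
  then have "\<forall>v\<in>?V. ?cx v = ?cy v" by simp
  then have "?cx = ?cy"
    using bary_x bary_y unfolding barycentric_def by (metis ext)
  then show False using bary_x bary_y assms(4) by (simp add: barycentric_def)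
qed

lemma complex_push_in_simplex:
  fixes T :: "'b::euclidean_space set set"
  assumes T: "simplicial_complex T" and "x \<in> \<Union>T" "y \<in> \<Union>T" "x \<noteq> y"
  obtains S where "S \<in> T" "complex_push T (x, y) \<in> S"
    "simplex_vertices S \<subseteq> {v. complex_coords T y v < complex_coords T x v}"
proof -
  let ?V = "complex_vertices T" and ?cx = "complex_coords T x" and ?cy = "complex_coords T y"
  define A where "A = {v \<in> ?V. ?cy v < ?cx v}"
  define w where "w v = coord_excess T x y v / sum (coord_excess T x y) ?V" for v
  obtain S where S: "S \<in> T" "x \<in> S" using assms(2) by blast
  note VS = simplicial_complex_simplex[OF T S(1)]
  have fin: "finite ?V" by (rule finite_complex_vertices[OF T])
  have pos: "0 < sum (coord_excess T x y) ?V" by (rule sum_coord_excess_pos[OF assms])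
  have "A \<subseteq> simplex_vertices S"
  proof
    fix v assume "v \<in> A"
    moreover have "0 \<le> ?cy v"
      using barycentric_complex_coords_vertices[OF T assms(3)] by (simp add: barycentric_def)
    ultimately have "?cx v \<noteq> 0" by (simp add: A_def)
    then show "v \<in> simplex_vertices S"
      using barycentric_complex_coords[OF T S] by (auto simp: barycentric_def)
  qed
  then have AS: "convex hull A \<in> T" "simplex_vertices (convex hull A) = A"
    using simplicial_complex_hull_vertex_subset[OF T S(1)]
      simplex_vertices_convex_hull[OF affine_independent_subset[OF VS(1)]] by auto
  have AV: "A \<subseteq> ?V" unfolding A_def by blast
  have w0: "\<forall>v\<in>?V - A. w v = 0" by (auto simp: w_def A_def coord_excess_def)
  have "sum w A = sum w ?V"
    using sum.mono_neutral_left[OF fin AV w0] .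
  also have "\<dots> = 1"
    using pos by (simp add: w_def flip: sum_divide_distrib)
  finally have "sum w A = 1" .
  moreover have "complex_push T (x, y) = (\<Sum>v\<in>A. w v *\<^sub>R v)"
    unfolding complex_push_def fst_conv snd_conv w_def[symmetric]
    using sum.mono_neutral_right[OF fin AV, of "\<lambda>v. w v *\<^sub>R v"] w0 by simp
  moreover have "\<forall>v. 0 \<le> w v" using pos by (simp add: w_def coord_excess_def)
  moreover have "finite A" using AV fin finite_subset by blast
  ultimately have "complex_push T (x, y) \<in> convex hull A"
    by (auto simp: convex_hull_finite)
  then show ?thesis using that AS by (auto simp: A_def)
qed

lemma continuous_on_complex_push:
  fixes T :: "'b::euclidean_space set set"
  assumes T: "simplicial_complex T"
  shows "continuous_on (deleted_product (\<Union>T)) (complex_push T)"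
proof -
  let ?D = "deleted_product (\<Union>T)"
  have "continuous_on ?D (\<lambda>z. complex_coords T (fst z) v)" for v
    by (rule continuous_on_compose2[OF continuous_on_complex_coords[OF T] continuous_on_fst])
      (auto simp: deleted_product_def)
  moreover have "continuous_on ?D (\<lambda>z. complex_coords T (snd z) v)" for v
    by (rule continuous_on_compose2[OF continuous_on_complex_coords[OF T] continuous_on_snd])
      (auto simp: deleted_product_def)
  ultimately have excess: "continuous_on ?D (\<lambda>z. coord_excess T (fst z) (snd z) v)" for v
    unfolding coord_excess_def by (intro continuous_on_max continuous_on_diff continuous_on_const)
  have "\<forall>z\<in>?D. sum (coord_excess T (fst z) (snd z)) (complex_vertices T) \<noteq> 0"
    using sum_coord_excess_pos[OF T] by (force simp: deleted_product_def)
  then show ?thesis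
    unfolding complex_push_def
    by (intro continuous_on_sum continuous_on_scaleR continuous_on_divide continuous_on_const excess)
qed

lemma compact_disjoint_uniform_gap:
  fixes \<K> :: "'b::euclidean_space set set"
  assumes "finite \<K>" "\<And>K. K \<in> \<K> \<Longrightarrow> compact K"
  obtains e where "e > 0"
    "\<And>K L a b. K \<in> \<K> \<Longrightarrow> L \<in> \<K> \<Longrightarrow> K \<inter> L = {} \<Longrightarrow> a \<in> K \<Longrightarrow> b \<in> L \<Longrightarrow> e \<le> dist a b"
proof -
  define P where "P = {(K, L) \<in> \<K> \<times> \<K>. K \<noteq> {} \<and> L \<noteq> {} \<and> K \<inter> L = {}}"
  define e where "e = Min (insert 1 ((\<lambda>(K, L). setdist K L) ` P))"
  have "P \<subseteq> \<K> \<times> \<K>" unfolding P_def by auto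
  then have finP: "finite P" using assms(1) finite_subset by blast
  have "0 < setdist K L" if "(K, L) \<in> P" for K L
  proof -
    have "setdist K L \<noteq> 0"
      using that assms(2) setdist_eq_0_compact_closed[of K L] compact_imp_closed
      unfolding P_def by auto
    then show ?thesis using setdist_pos_le[of K L] by linarith
  qed
  then have "0 < e" unfolding e_def using finP by auto
  moreover have "e \<le> dist a b"
    if "K \<in> \<K>" "L \<in> \<K>" "K \<inter> L = {}" "a \<in> K" "b \<in> L" for K L a b
  proof -
    have "(K, L) \<in> P" using that unfolding P_def by auto
    then have "e \<le> setdist K L" unfolding e_def using finP by (force simp: Min_le_iff)
    also have "\<dots> \<le> dist a b" using that by (intro setdist_le_dist)
    finally show ?thesis .
  qed
  ultimately show ?thesis using that by blast
qed
lemma simplicial_complex_push: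
  fixes T :: "'b::euclidean_space set set"
  assumes T: "simplicial_complex T"
  obtains e where "e > 0"
    "\<And>x y. (x, y) \<in> deleted_product (\<Union>T) \<Longrightarrow>
       complex_push T (x, y) \<in> \<Union>T \<and> e \<le> dist (complex_push T (x, y)) (complex_push T (y, x))"
proof -
  have "finite T" using T by (simp add: simplicial_complex_def)
  moreover have "compact S" if "S \<in> T" for S
    using simplicial_complex_simplex[OF T that] by (metis compact_convex_hull finite_imp_compact)
  ultimately obtain e where e: "e > 0"
    "\<And>K L a b. K \<in> T \<Longrightarrow> L \<in> T \<Longrightarrow> K \<inter> L = {} \<Longrightarrow> a \<in> K \<Longrightarrow> b \<in> L \<Longrightarrow> e \<le> dist a b"
    using compact_disjoint_uniform_gap by metis
  show ?thesis
  proof (rule that[OF e(1)])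
    fix x y assume "(x, y) \<in> deleted_product (\<Union>T)"
    then have xy: "x \<in> \<Union>T" "y \<in> \<Union>T" "x \<noteq> y" by (auto simp: deleted_product_def)
    obtain S where S: "S \<in> T" "complex_push T (x, y) \<in> S"
      "simplex_vertices S \<subseteq> {v. complex_coords T y v < complex_coords T x v}"
      using complex_push_in_simplex[OF T xy] .
    obtain S' where S': "S' \<in> T" "complex_push T (y, x) \<in> S'"
      "simplex_vertices S' \<subseteq> {v. complex_coords T x v < complex_coords T y v}"
      using complex_push_in_simplex[OF T xy(2,1) xy(3)[symmetric]] .
    have "S \<inter> S' = {}"
      using simplicial_complex_disjoint[OF T S(1) S'(1)] S(3) S'(3) by force
    then show "complex_push T (x, y) \<in> \<Union>T \<and> e \<le> dist (complex_push T (x, y)) (complex_push T (y, x))"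
      using e(2) S S' by blast
  qed
qed

lemma polytope_Times:
  fixes S :: "'a::euclidean_space set" and S' :: "'b::euclidean_space set"
  assumes "polytope S" "polytope S'"
  shows "polytope (S \<times> S')"
proof -
  obtain A A' where "finite A" "S = convex hull A" "finite A'" "S' = convex hull A'"
    using assms unfolding polytope_def by blast
  then have "finite (A \<times> A')" "S \<times> S' = convex hull (A \<times> A')"
    by (simp_all add: convex_hull_Times)
  then show ?thesis unfolding polytope_def by blast
qed

lemma compact_polyhedron_Times:
  fixes X :: "'a::euclidean_space set" and Y :: "'b::euclidean_space set"
  assumes "compact_polyhedron X" "compact_polyhedron Y"
  shows "compact_polyhedron (X \<times> Y)"
proof -
  obtain \<S> \<S>' where S: "finite \<S>" "\<forall>S\<in>\<S>. polytope S" "X = \<Union>\<S>"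
    "finite \<S>'" "\<forall>S\<in>\<S>'. polytope S" "Y = \<Union>\<S>'"
    using assms unfolding compact_polyhedron_def by metis
  define \<P> where "\<P> = (\<lambda>(S, S'). S \<times> S') ` (\<S> \<times> \<S>')"
  have "finite \<P>" "\<forall>P\<in>\<P>. polytope P" "X \<times> Y = \<Union>\<P>"
    using S unfolding \<P>_def by (auto intro!: polytope_Times)
  then show ?thesis unfolding compact_polyhedron_def by blast
qed

lemma compact_polyhedron_unit_interval: "compact_polyhedron {0..1::real}"
proof -
  have "polytope {0..1::real}" using polytope_interval[of 0 "1::real"] by simp
  then show ?thesis unfolding compact_polyhedron_def by (intro exI[of _ "{{0..1}}"]) simp
qed

lemma compact_polyhedron_imp_compact:
  fixes X :: "'a::euclidean_space set"
  assumes "compact_polyhedron X"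
  shows "compact X"
  using assms unfolding compact_polyhedron_def by (auto intro: polytope_imp_compact)

lemma polytope_halfspace_representation:
  fixes S :: "'a::euclidean_space set"
  assumes "polytope S"
  shows "\<exists>I. finite I \<and> S = {x. \<forall>(a, b)\<in>I. a \<bullet> x \<le> b}"
proof -
  obtain F where F: "finite F" "S = \<Inter>F" "\<forall>h\<in>F. \<exists>a b. a \<noteq> 0 \<and> h = {x. a \<bullet> x \<le> b}"
    using polytope_imp_polyhedron[OF assms] unfolding polyhedron_def by blast
  have "\<exists>p. h = {x. fst p \<bullet> x \<le> snd p}" if "h \<in> F" for h
  proof -
    obtain a b where "h = {x. a \<bullet> x \<le> b}" using F(3) \<open>h \<in> F\<close> by blast
    then show ?thesis by (intro exI[of _ "(a, b)"], simp)
  qed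
  then obtain f where f: "\<forall>h\<in>F. h = {x. fst (f h) \<bullet> x \<le> snd (f h)}"
    using bchoice[of F "\<lambda>h p. h = {x. fst p \<bullet> x \<le> snd p}"] by blast
  show ?thesis
  proof (intro exI[of _ "f ` F"] conjI)
    show "finite (f ` F)" using F(1) by simp
    have "x \<in> h \<longleftrightarrow> fst (f h) \<bullet> x \<le> snd (f h)" if "h \<in> F" for h x
      using f that by blast
    then show "S = {x. \<forall>(a, b)\<in>f ` F. a \<bullet> x \<le> b}"
      using F(2) by (auto simp: split_beta)
  qed
qed

lemma Int_halfspace_face_of:
  fixes D :: "'a::euclidean_space set"
  assumes "convex D"
    and uncut: "\<And>x y. x \<in> D \<Longrightarrow> y \<in> D \<Longrightarrow> a \<bullet> x \<le> b \<and> a \<bullet> y \<le> b \<or> a \<bullet> x \<ge> b \<and> a \<bullet> y \<ge> b"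
  shows "D \<inter> {x. a \<bullet> x \<le> b} face_of D"
proof (cases "\<forall>y\<in>D. a \<bullet> y \<le> b")
  case True
  then have "D \<inter> {x. a \<bullet> x \<le> b} = D" by auto
  then show ?thesis using face_of_refl[OF assms(1)] by simp
next
  case False
  then obtain y1 where "y1 \<in> D" "a \<bullet> y1 > b" by (auto simp: not_le)
  then have ge: "a \<bullet> y \<ge> b" if "y \<in> D" for y
    using uncut[OF \<open>y1 \<in> D\<close> that] by linarith
  then have "D \<inter> {x. a \<bullet> x \<le> b} = D \<inter> {x. a \<bullet> x = b}" by force
  then show ?thesis using face_of_Int_supporting_hyperplane_ge[OF assms(1) ge] by simp
qed

lemma Int_halfspaces_face_of:
  fixes D :: "'a::euclidean_space set"
  assumes "convex D"
    and uncut: "\<And>a b x y. (a, b) \<in> I \<Longrightarrow> x \<in> D \<Longrightarrow> y \<in> D \<Longrightarrow>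
                  a \<bullet> x \<le> b \<and> a \<bullet> y \<le> b \<or> a \<bullet> x \<ge> b \<and> a \<bullet> y \<ge> b"
  shows "D \<inter> {x. \<forall>(a, b)\<in>I. a \<bullet> x \<le> b} face_of D"
proof -
  have eq: "D \<inter> {x. \<forall>(a, b)\<in>I. a \<bullet> x \<le> b} = \<Inter>(insert D ((\<lambda>(a, b). D \<inter> {x. a \<bullet> x \<le> b}) ` I))"
    by auto
  have faces: "D \<inter> {x. a \<bullet> x \<le> b} face_of D" if "(a, b) \<in> I" for a b
    using Int_halfspace_face_of[OF assms(1) uncut[OF that]] .
  show ?thesis
    unfolding eq by (rule face_of_Inter) (use faces in \<open>auto intro: face_of_refl[OF assms(1)]\<close>)
qed

lemma face_of_Int_faces:
  assumes "D \<inter> D' face_of D" "C face_of D" "C' face_of D'"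
  shows "C \<inter> C' face_of C"
proof -
  have "C \<inter> C' face_of D" using face_of_trans[OF face_of_Int_Int[OF assms(2,3)] assms(1)] .
  then show ?thesis using face_of_imp_subset[OF assms(2)] by (meson face_of_subset inf_le1)
qed

text \<open>Cut a box containing the polytopes by all hyperplanes bounding them; the cells of the resulting
  complex each lie on one side of every such hyperplane, so a cell meets a polytope in a face.\<close>
lemma polytopes_union_cell_complex:
  fixes \<F> :: "'a::euclidean_space set set"
  assumes "finite \<F>" "\<And>S. S \<in> \<F> \<Longrightarrow> polytope S"
  obtains \<M> where "finite \<M>" "\<And>C. C \<in> \<M> \<Longrightarrow> polytope C"
    "\<And>C1 C2. C1 \<in> \<M> \<Longrightarrow> C2 \<in> \<M> \<Longrightarrow> C1 \<inter> C2 face_of C1" "\<Union>\<M> = \<Union>\<F>"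
proof -
  have "\<forall>S\<in>\<F>. \<exists>I. finite I \<and> S = {x. \<forall>(a, b)\<in>I. a \<bullet> x \<le> b}"
    using polytope_halfspace_representation assms(2) by blast
  then obtain I where I: "\<forall>S\<in>\<F>. finite (I S) \<and> S = {x. \<forall>(a, b)\<in>I S. a \<bullet> x \<le> b}"
    by (rule bchoice[THEN exE])
  have "finite (\<Union>S\<in>\<F>. I S)" using assms(1) I by auto
  obtain c where box: "\<Union>\<F> \<subseteq> cbox (-c) c"
    using bounded_subset_cbox_symmetric assms by (metis bounded_Union polytope_imp_bounded)
  obtain \<G> where \<G>: "finite \<G>" "\<forall>X \<in> \<G>. polytope X" "\<forall>X \<in> \<G>. \<forall>Y \<in> \<G>. X \<inter> Y face_of X"
      "\<forall>C \<in> {cbox (-c) c}. \<forall>x \<in> C. \<exists>D. D \<in> \<G> \<and> x \<in> D \<and> D \<subseteq> C"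
      "\<forall>X \<in> \<G>. \<forall>x \<in> X. \<forall>y \<in> X. \<forall>a b. (a, b) \<in> (\<Union>S\<in>\<F>. I S) \<longrightarrow>
         a \<bullet> x \<le> b \<and> a \<bullet> y \<le> b \<or> a \<bullet> x \<ge> b \<and> a \<bullet> y \<ge> b"
  proof -
    have "\<exists>\<G>. \<Union>\<G> = \<Union>{cbox (-c) c} \<and> finite \<G> \<and>
        (\<forall>C \<in> \<G>. \<exists>D. D \<in> {cbox (-c) c} \<and> C \<subseteq> D) \<and>
        (\<forall>C \<in> {cbox (-c) c}. \<forall>x \<in> C. \<exists>D. D \<in> \<G> \<and> x \<in> D \<and> D \<subseteq> C) \<and>
        (\<forall>X \<in> \<G>. polytope X) \<and> (\<forall>X \<in> \<G>. aff_dim X \<le> aff_dim (cbox (-c) c)) \<and>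
        (\<forall>X \<in> \<G>. \<forall>Y \<in> \<G>. X \<inter> Y face_of X) \<and>
        (\<forall>X \<in> \<G>. \<forall>x \<in> X. \<forall>y \<in> X. \<forall>a b. (a, b) \<in> (\<Union>S\<in>\<F>. I S) \<longrightarrow>
           a \<bullet> x \<le> b \<and> a \<bullet> y \<le> b \<or> a \<bullet> x \<ge> b \<and> a \<bullet> y \<ge> b)"
      by (rule cell_subdivision_lemma[OF _ _ _ _ \<open>finite (\<Union>S\<in>\<F>. I S)\<close>])
        (auto intro: polytope_interval face_of_refl[OF convex_box(1)])
    then show ?thesis using that by (elim exE conjE) blast
  qed
  define \<M> where "\<M> = (\<lambda>(D, S). D \<inter> S) ` (\<G> \<times> \<F>)"
  have face: "D \<inter> S face_of D" if "D \<in> \<G>" "S \<in> \<F>" for D S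
  proof -
    have "convex D" using \<G>(2) \<open>D \<in> \<G>\<close> polytope_imp_convex by blast
    moreover have "a \<bullet> x \<le> b \<and> a \<bullet> y \<le> b \<or> a \<bullet> x \<ge> b \<and> a \<bullet> y \<ge> b"
      if "(a, b) \<in> I S" "x \<in> D" "y \<in> D" for a b x y
      using \<G>(5)[rule_format, OF \<open>D \<in> \<G>\<close> that(2,3)] \<open>S \<in> \<F>\<close> that(1) by blast
    ultimately have "D \<inter> {x. \<forall>(a, b)\<in>I S. a \<bullet> x \<le> b} face_of D"
      by (rule Int_halfspaces_face_of)
    then show ?thesis using I \<open>S \<in> \<F>\<close> by simp
  qed
  show ?thesis
  proof (rule that[of \<M>])
    show "finite \<M>" unfolding \<M>_def using \<G>(1) assms(1) by simp
    show "polytope C" if C: "C \<in> \<M>" for C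
    proof -
      obtain D S where "D \<in> \<G>" "S \<in> \<F>" "C = D \<inter> S" using C unfolding \<M>_def by blast
      then show ?thesis using face \<G>(2) face_of_polytope_polytope by metis
    qed
    show "C1 \<inter> C2 face_of C1" if C: "C1 \<in> \<M>" "C2 \<in> \<M>" for C1 C2
    proof -
      obtain D1 S1 D2 S2 where "D1 \<in> \<G>" "S1 \<in> \<F>" "C1 = D1 \<inter> S1" "D2 \<in> \<G>" "S2 \<in> \<F>" "C2 = D2 \<inter> S2"
        using C unfolding \<M>_def by blast
      then show ?thesis using face \<G>(3) face_of_Int_faces by metis
    qed
    show "\<Union>\<M> = \<Union>\<F>"
    proof
      show "\<Union>\<M> \<subseteq> \<Union>\<F>" unfolding \<M>_def by auto
      show "\<Union>\<F> \<subseteq> \<Union>\<M>"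
      proof
        fix x assume "x \<in> \<Union>\<F>"
        then obtain S where "S \<in> \<F>" "x \<in> S" by blast
        moreover obtain D where "D \<in> \<G>" "x \<in> D" using \<G>(4) box \<open>x \<in> \<Union>\<F>\<close> by blast
        ultimately show "x \<in> \<Union>\<M>" unfolding \<M>_def by blast
      qed
    qed
  qed
qed

lemma compact_polyhedron_triangulation:
  fixes X :: "'a::euclidean_space set"
  assumes "compact_polyhedron X"
  obtains T where "simplicial_complex T" "\<Union>T = X"
proof -
  obtain \<F> where "finite \<F>" "\<And>S. S \<in> \<F> \<Longrightarrow> polytope S" "X = \<Union>\<F>"
    using assms unfolding compact_polyhedron_def by blast
  moreover obtain \<M> where "finite \<M>" "\<And>C. C \<in> \<M> \<Longrightarrow> polytope C"
    "\<And>C1 C2. C1 \<in> \<M> \<Longrightarrow> C2 \<in> \<M> \<Longrightarrow> C1 \<inter> C2 face_of C1" "\<Union>\<M> = \<Union>\<F>"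
    using polytopes_union_cell_complex calculation by metis
  ultimately show ?thesis
    using simplicial_subdivision_of_cell_complex that by metis
qed

lemma zero_in_Nplus [simp]: "0 \<in> Nplus"
  by (simp add: Nplus_def)

lemma compact_Nplus: "compact Nplus"
proof -
  have "(\<lambda>k::nat. 1 / (real k + 1)) = (\<lambda>k. inverse (real (Suc k)))"
    by (simp add: divide_inverse add.commute)
  then have "(\<lambda>k::nat. 1 / (real k + 1)) \<longlonglongrightarrow> 0"
    using LIMSEQ_inverse_real_of_nat by simp
  then show ?thesis unfolding Nplus_def by (rule compact_sequence_with_limit)
qed

lemma Nplus_small_positive:
  assumes "\<delta> > 0"
  obtains b where "b \<in> Nplus" "0 < b" "b < \<delta>"
proof -
  obtain k :: nat where "inverse (real (Suc k)) < \<delta>" using reals_Archimedean[OF assms] by blast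
  then show ?thesis
    by (intro that[of "1 / (real k + 1)"]) (auto simp: Nplus_def divide_inverse add.commute)
qed

lemma compact_injective_separation:
  fixes f :: "'a::metric_space \<Rightarrow> 'b::metric_space"
  assumes "compact K" "continuous_on K f" "inj_on f K" "\<delta> > 0"
  obtains \<mu> where "\<mu> > 0" "\<And>x y. x \<in> K \<Longrightarrow> y \<in> K \<Longrightarrow> \<delta> \<le> dist x y \<Longrightarrow> \<mu> \<le> dist (f x) (f y)"
proof -
  define K2 where "K2 = (K \<times> K) \<inter> {z. \<delta> \<le> dist (fst z) (snd z)}"
  have "compact K2"
    unfolding K2_def by (intro compact_Int_closed compact_Times assms(1) closed_Collect_le continuous_intros)
  have "continuous_on K2 (\<lambda>z. f (fst z))"
    by (rule continuous_on_compose2[OF assms(2) continuous_on_fst[OF continuous_on_id]]) (force simp: K2_def)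
  moreover have "continuous_on K2 (\<lambda>z. f (snd z))"
    by (rule continuous_on_compose2[OF assms(2) continuous_on_snd[OF continuous_on_id]]) (force simp: K2_def)
  ultimately have cont: "continuous_on K2 (\<lambda>z. dist (f (fst z)) (f (snd z)))"
    by (rule continuous_on_dist)
  show ?thesis
  proof (cases "K2 = {}")
    case True
    then show ?thesis by (intro that[of 1]) (auto simp: K2_def)
  next
    case False
    then obtain z0 where z0: "z0 \<in> K2" "\<And>z. z \<in> K2 \<Longrightarrow> dist (f (fst z0)) (f (snd z0)) \<le> dist (f (fst z)) (f (snd z))"
      using continuous_attains_inf[OF \<open>compact K2\<close> False cont] by blast
    have "fst z0 \<in> K" "snd z0 \<in> K" "fst z0 \<noteq> snd z0"
      using z0(1) assms(4) unfolding K2_def by auto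
    then have "f (fst z0) \<noteq> f (snd z0)"
      using assms(3) by (meson inj_onD)
    then show ?thesis
      using z0(2) by (intro that[of "dist (f (fst z0)) (f (snd z0))"]) (auto simp: K2_def)
  qed
qed

definition ramp :: "real \<Rightarrow> real \<Rightarrow> real" where
  "ramp e t = min 1 (max 0 (4 / e * t - 1))"

lemma ramp_eq_1: "0 < e \<Longrightarrow> e / 2 \<le> t \<Longrightarrow> ramp e t = 1"
  by (simp add: ramp_def field_simps)

lemma ramp_eq_0: "0 < e \<Longrightarrow> t \<le> e / 4 \<Longrightarrow> ramp e t = 0"
  by (simp add: ramp_def field_simps)

lemma ramp_bounds: "0 \<le> ramp e t" "ramp e t \<le> 1"
  by (simp_all add: ramp_def)

lemma continuous_on_ramp: "continuous_on UNIV (ramp e)"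
  unfolding ramp_def by (intro continuous_intros)

lemma dist_Pair_le_add:
  fixes p q :: "'a::metric_space" and s t :: "'b::metric_space"
  shows "dist (p, s) (q, t) \<le> dist p q + dist s t"
  using sqrt_sum_squares_le_sum_abs[of "dist p q" "dist s t"] by (simp add: dist_Pair_Pair)

text \<open>If the heights \<open>s, t\<close> differ by at least \<open>\<epsilon>/2\<close>, \<open>\<Phi>\<close> compares the higher point at
  level \<open>b\<close> with the lower one at level \<open>0\<close>, where \<open>h\<close> is injective. Otherwise \<open>p, q\<close> are
  \<open>\<epsilon>/2\<close>-apart, so \<open>h (p, 0)\<close> and \<open>h (q, 0)\<close> differ by more than \<open>h\<close> moves any point
  between levels \<open>0\<close> and \<open>b\<close>.\<close>
lemma separated_pairs_antisymmetric_map: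
  fixes X :: "'a::metric_space set" and h :: "'a \<times> real \<Rightarrow> 'n::real_normed_vector"
  assumes "compact X" "continuous_on (X \<times> Nplus) h" "inj_on h (X \<times> Nplus)" "0 < \<epsilon>"
  obtains \<Phi> :: "('a \<times> real) \<times> ('a \<times> real) \<Rightarrow> 'n" where "continuous_on ((X \<times> UNIV) \<times> (X \<times> UNIV)) \<Phi>"
    "\<And>u v. \<Phi> (v, u) = - \<Phi> (u, v)"
    "\<And>u v. u \<in> X \<times> UNIV \<Longrightarrow> v \<in> X \<times> UNIV \<Longrightarrow> \<epsilon> \<le> dist u v \<Longrightarrow> \<Phi> (u, v) \<noteq> 0"
proof -
  have "continuous_on X (\<lambda>p. h (p, 0))"
    by (rule continuous_on_compose2[OF assms(2)]; auto intro!: continuous_intros)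
  moreover have "inj_on (\<lambda>p. h (p, 0)) X"
    using assms(3) zero_in_Nplus unfolding inj_on_def by blast
  ultimately obtain \<mu> where \<mu>: "\<mu> > 0"
    "\<And>p q. p \<in> X \<Longrightarrow> q \<in> X \<Longrightarrow> \<epsilon> / 2 \<le> dist p q \<Longrightarrow> \<mu> \<le> dist (h (p, 0)) (h (q, 0))"
    using compact_injective_separation[OF assms(1)] assms(4) by (metis half_gt_zero)
  have "uniformly_continuous_on (X \<times> Nplus) h"
    by (rule compact_uniformly_continuous[OF assms(2) compact_Times[OF assms(1) compact_Nplus]])
  then obtain \<delta> where \<delta>: "\<delta> > 0"
    "\<And>u v. u \<in> X \<times> Nplus \<Longrightarrow> v \<in> X \<times> Nplus \<Longrightarrow> dist v u < \<delta> \<Longrightarrow> dist (h v) (h u) < \<mu> / 2"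
    using uniformly_continuous_onE \<mu>(1) half_gt_zero by metis
  obtain b where b: "b \<in> Nplus" "0 < b" "b < \<delta>" using Nplus_small_positive[OF \<delta>(1)] .
  have close: "norm (h (p, b) - h (p, 0)) < \<mu> / 2" if "p \<in> X" for p
    using \<delta>(2)[of "(p, 0)" "(p, b)"] that b by (simp add: dist_Pair_Pair dist_norm)
  define \<Phi> :: "('a \<times> real) \<times> ('a \<times> real) \<Rightarrow> 'n" where
    "\<Phi> = (\<lambda>((p, s), (q, t)). h (p, 0) - h (q, 0)
       + ramp \<epsilon> (s - t) *\<^sub>R (h (p, b) - h (p, 0)) - ramp \<epsilon> (t - s) *\<^sub>R (h (q, b) - h (q, 0)))"
  show ?thesis
  proof (rule that[of \<Phi>])
    let ?Z = "(X \<times> UNIV) \<times> (X \<times> (UNIV :: real set))"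
    have level1: "continuous_on ?Z (\<lambda>z. h (fst (fst z), c))" if "c \<in> Nplus" for c
      using that by (intro continuous_on_compose2[OF assms(2), of _ "\<lambda>z. (fst (fst z), c)"]
        continuous_intros) auto
    have level2: "continuous_on ?Z (\<lambda>z. h (fst (snd z), c))" if "c \<in> Nplus" for c
      using that by (intro continuous_on_compose2[OF assms(2), of _ "\<lambda>z. (fst (snd z), c)"]
        continuous_intros) auto
    have ramp: "continuous_on ?Z (\<lambda>z. ramp \<epsilon> (g z))" if "continuous_on ?Z g" for g
      using continuous_on_compose2[OF continuous_on_ramp that] by simp
    show "continuous_on ?Z \<Phi>"
      unfolding \<Phi>_def case_prod_unfold
      by (intro continuous_on_add continuous_on_diff continuous_on_scaleR ramp level1 level2
          b(1) zero_in_Nplus continuous_intros; simp)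
    show "\<Phi> (v, u) = - \<Phi> (u, v)" for u v
      by (cases u; cases v; simp add: \<Phi>_def algebra_simps)
  next
    fix u v :: "'a \<times> real"
    assume uv: "u \<in> X \<times> UNIV" "v \<in> X \<times> UNIV" "\<epsilon> \<le> dist u v"
    obtain p s q t where pq: "u = (p, s)" "v = (q, t)" "p \<in> X" "q \<in> X"
      using uv(1,2) by auto
    have inj: "h (p, c) \<noteq> h (q, c')" if "c \<in> Nplus" "c' \<in> Nplus" "(p, c) \<noteq> (q, c')" for c c'
      using assms(3) pq(3,4) that by (meson inj_onD mem_Sigma_iff)
    consider "\<epsilon> / 2 \<le> s - t" | "\<epsilon> / 2 \<le> t - s" | "\<bar>s - t\<bar> < \<epsilon> / 2" by linarith
    then show "\<Phi> (u, v) \<noteq> 0"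
    proof cases
      case 1
      then have "\<Phi> (u, v) = h (p, b) - h (q, 0)"
        using assms(4) by (simp add: \<Phi>_def pq ramp_eq_0 ramp_eq_1)
      then show ?thesis using inj[of b 0] b by simp
    next
      case 2
      then have "\<Phi> (u, v) = h (p, 0) - h (q, b)"
        using assms(4) by (simp add: \<Phi>_def pq ramp_eq_0 ramp_eq_1)
      then show ?thesis using inj[of 0 b] b by simp
    next
      case 3
      have "\<epsilon> / 2 \<le> dist p q"
        using uv(3) 3 dist_Pair_le_add[of p s q t] by (simp add: pq dist_real_def)
      then have far: "\<mu> \<le> norm (h (p, 0) - h (q, 0))"
        using \<mu>(2) pq(3,4) by (simp add: dist_norm)
      define e where "e = ramp \<epsilon> (s - t) *\<^sub>R (h (p, b) - h (p, 0)) - ramp \<epsilon> (t - s) *\<^sub>R (h (q, b) - h (q, 0))"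
      have "norm e < \<mu> / 2"
      proof (cases "t \<le> s")
        case True
        then have "norm e = ramp \<epsilon> (s - t) * norm (h (p, b) - h (p, 0))"
          using assms(4) by (simp add: e_def ramp_eq_0 ramp_bounds)
        also have "\<dots> \<le> norm (h (p, b) - h (p, 0))"
          by (simp add: mult_left_le_one_le ramp_bounds)
        finally show ?thesis using close[OF pq(3)] by linarith
      next
        case False
        then have "norm e = ramp \<epsilon> (t - s) * norm (h (q, b) - h (q, 0))"
          using assms(4) by (simp add: e_def ramp_eq_0 ramp_bounds)
        also have "\<dots> \<le> norm (h (q, b) - h (q, 0))"
          by (simp add: mult_left_le_one_le ramp_bounds)
        finally show ?thesis using close[OF pq(4)] by linarith
      qed
      moreover have "\<Phi> (u, v) = (h (p, 0) - h (q, 0)) + e"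
        by (simp add: \<Phi>_def pq e_def algebra_simps)
      ultimately show ?thesis
        using far \<mu>(1) norm_triangle_ineq4[of "h (p, 0) - h (q, 0) + e" e] by auto
    qed
  qed
qed

lemma continuous_on_deleted_product_swap:
  assumes "continuous_on (deleted_product Y) f"
  shows "continuous_on (deleted_product Y) (\<lambda>z. f (snd z, fst z))"
  by (rule continuous_on_compose2[OF assms]; auto intro!: continuous_intros simp: deleted_product_def)

lemma Z2_map_to_sphere_sgn:
  fixes D :: "'a::topological_space \<times> 'a \<Rightarrow> 'b::euclidean_space"
  assumes "continuous_on (deleted_product Y) D"
    and "\<And>p q. (p, q) \<in> deleted_product Y \<Longrightarrow> D (q, p) = - D (p, q)"
    and "\<And>p q. (p, q) \<in> deleted_product Y \<Longrightarrow> D (p, q) \<noteq> 0"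
  shows "Z2_map_to_sphere Y (\<lambda>z. sgn (D z))"
  unfolding Z2_map_to_sphere_def
proof (intro conjI allI impI)
  have nz: "\<forall>z\<in>deleted_product Y. D z \<noteq> 0" using assms(3) by auto
  then show "continuous_on (deleted_product Y) (\<lambda>z. sgn (D z))"
    by (rule continuous_on_sgn[OF assms(1)])
  show "(\<lambda>z. sgn (D z)) ` deleted_product Y \<subseteq> sphere 0 1"
    using nz by (auto simp: norm_sgn)
  show "sgn (D (q, p)) = - sgn (D (p, q))" if "(p, q) \<in> deleted_product Y" for p q
    using assms(2)[OF that] by (simp add: sgn_minus)
qed

lemma Z2_map_to_sphere_compose_antisymmetric:
  fixes r :: "'a::topological_space \<times> 'a \<Rightarrow> 'c::metric_space" and \<Phi> :: "'c \<times> 'c \<Rightarrow> 'b::euclidean_space"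
  assumes r: "continuous_on (deleted_product Y) r"
    and r_sep: "\<And>x y. (x, y) \<in> deleted_product Y \<Longrightarrow> r (x, y) \<in> Z \<and> \<epsilon> \<le> dist (r (x, y)) (r (y, x))"
    and \<Phi>: "continuous_on (Z \<times> Z) \<Phi>" "\<And>u v. \<Phi> (v, u) = - \<Phi> (u, v)"
      "\<And>u v. u \<in> Z \<Longrightarrow> v \<in> Z \<Longrightarrow> \<epsilon> \<le> dist u v \<Longrightarrow> \<Phi> (u, v) \<noteq> 0"
  shows "Z2_map_to_sphere Y (\<lambda>z. sgn (\<Phi> (r z, r (snd z, fst z))))"
proof (rule Z2_map_to_sphere_sgn)
  have swap: "(q, p) \<in> deleted_product Y" if "(p, q) \<in> deleted_product Y" for p q
    using that by (auto simp: deleted_product_def)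
  have "(\<lambda>z. (r z, r (snd z, fst z))) ` deleted_product Y \<subseteq> Z \<times> Z"
  proof (rule image_subsetI)
    fix z assume "z \<in> deleted_product Y"
    then obtain p q where pq: "z = (p, q)" "(p, q) \<in> deleted_product Y" by (cases z) auto
    then show "(r z, r (snd z, fst z)) \<in> Z \<times> Z"
      using r_sep[OF pq(2)] r_sep[OF swap[OF pq(2)]] by simp
  qed
  then show "continuous_on (deleted_product Y) (\<lambda>z. \<Phi> (r z, r (snd z, fst z)))"
    by (rule continuous_on_compose2[OF \<Phi>(1) continuous_on_Pair[OF r continuous_on_deleted_product_swap[OF r]]])
  show "\<Phi> (r (q, p), r (snd (q, p), fst (q, p))) = - \<Phi> (r (p, q), r (snd (p, q), fst (p, q)))" for p q
    unfolding fst_conv snd_conv by (rule \<Phi>(2))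
  show "\<Phi> (r (p, q), r (snd (p, q), fst (p, q))) \<noteq> 0" if "(p, q) \<in> deleted_product Y" for p q
    using r_sep[OF that] r_sep[OF swap[OF that]] \<Phi>(3)[of "r (p, q)" "r (q, p)"] by simp
qed

theorem lemma1:
  fixes X :: "'a::euclidean_space set" and E :: "'n::euclidean_space set"
  assumes "compact_polyhedron X"
    and "(X \<times> Nplus) homeomorphic E"
  shows "\<exists>g :: ('a \<times> real) \<times> ('a \<times> real) \<Rightarrow> 'n. Z2_map_to_sphere (X \<times> {0..1::real}) g"
proof -
  let ?P = "X \<times> {0..1::real}"
  obtain T where T: "simplicial_complex T" "\<Union>T = ?P"
    using compact_polyhedron_triangulation[OF compact_polyhedron_Times[OF assms(1) compact_polyhedron_unit_interval]] .
  obtain \<epsilon> where \<epsilon>: "\<epsilon> > 0" "\<And>x y. (x, y) \<in> deleted_product ?P \<Longrightarrow>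
      complex_push T (x, y) \<in> ?P \<and> \<epsilon> \<le> dist (complex_push T (x, y)) (complex_push T (y, x))"
    using simplicial_complex_push[OF T(1)] unfolding T(2) by blast
  then have push: "\<And>x y. (x, y) \<in> deleted_product ?P \<Longrightarrow>
      complex_push T (x, y) \<in> X \<times> UNIV \<and> \<epsilon> \<le> dist (complex_push T (x, y)) (complex_push T (y, x))"
    by (auto simp: mem_Times_iff)
  obtain h :: "'a \<times> real \<Rightarrow> 'n" and k where "homeomorphism (X \<times> Nplus) E h k"
    using assms(2) unfolding homeomorphic_def by blast
  then have h: "continuous_on (X \<times> Nplus) h" "inj_on h (X \<times> Nplus)"
    by (rule homeomorphism_cont1, rule inj_on_inverseI[OF homeomorphism_apply1])
  obtain \<Phi> :: "('a \<times> real) \<times> ('a \<times> real) \<Rightarrow> 'n" where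
      "continuous_on ((X \<times> UNIV) \<times> (X \<times> UNIV)) \<Phi>" "\<And>u v. \<Phi> (v, u) = - \<Phi> (u, v)"
      "\<And>u v. u \<in> X \<times> UNIV \<Longrightarrow> v \<in> X \<times> UNIV \<Longrightarrow> \<epsilon> \<le> dist u v \<Longrightarrow> \<Phi> (u, v) \<noteq> 0"
    using separated_pairs_antisymmetric_map[OF compact_polyhedron_imp_compact[OF assms(1)] h \<epsilon>(1)]
    by blast
  then have "Z2_map_to_sphere ?P (\<lambda>z. sgn (\<Phi> (complex_push T z, complex_push T (snd z, fst z))))"
    using Z2_map_to_sphere_compose_antisymmetric[OF continuous_on_complex_push[OF T(1), unfolded T(2)] push]
    by blast
  then show ?thesis by blast
qed

end
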